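(* Let $M$ be a closed manifold and $\phi\in A^1(\mathbb{R}^2,M)$. If $\phi$ has a dense orbit homeomorphic to a cylinder $S^1\times\mathbb{R}$, then every two-dimensional orbit of $\phi$ is homeomorphic either to a torus $\mathbb{T}^2$ or to a cylinder $S^1\times\mathbb{R}$.
   Context: $A^1(\mathbb{R}^2,M)$ is the set of actions $\phi:\mathbb{R}^2\times M\to M$ of $\mathbb{R}^2$ on $M$ with $C^1$ infinitesimal generators. The orbit of $p$ is $\mathcal{O}_p=\{\phi(\omega,p):\omega\in\mathbb{R}^2\}$, identified with $\mathbb{R}^2/G_p$ where $G_p=\{\omega:\phi(\omega,p)=p\}$ is the isotropy group; an orbit is two-dimensional if $G_p$ is discrete. *)

theory Defs
  imports "HOL-Analysis.Analysis"
begin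

definition C1_on :: "'a::euclidean_space set \<Rightarrow> ('a \<Rightarrow> 'b::euclidean_space) \<Rightarrow> bool" where
  "C1_on U f \<longleftrightarrow> (\<exists>f'. (\<forall>x\<in>U. (f has_derivative blinfun_apply (f' x)) (at x))
                        \<and> continuous_on U f')"

definition C1_submanifold :: "nat \<Rightarrow> 'a::euclidean_space set \<Rightarrow> bool" where
  "C1_submanifold k M \<longleftrightarrow>
     (\<forall>p\<in>M. \<exists>U V (h::'a \<Rightarrow> 'a) g S. open U \<and> p \<in> U \<and> open V \<and> h ` U = V \<and>
        (\<forall>x\<in>U. g (h x) = x) \<and> (\<forall>y\<in>V. h (g y) = y) \<and> C1_on U h \<and> C1_on V g \<and>
        subspace S \<and> dim S = k \<and> h ` (U \<inter> M) = V \<inter> S)"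

text \<open>Closed manifold: compact, nonempty, boundaryless C^1 manifold (embedded in some
  Euclidean space, which is no loss of generality by Whitney embedding).\<close>
definition closed_manifold :: "'a::euclidean_space set \<Rightarrow> bool" where
  "closed_manifold M \<longleftrightarrow> compact M \<and> M \<noteq> {} \<and> (\<exists>k. C1_submanifold k M)"

text \<open>Actions of R^2 on M with C^1 infinitesimal generators (the class A^1(R^2,M)).\<close>
definition C1_action :: "'a::euclidean_space set \<Rightarrow> (real \<times> real \<Rightarrow> 'a \<Rightarrow> 'a) \<Rightarrow> bool" where
  "C1_action M \<phi> \<longleftrightarrow>
     (\<forall>\<omega>. \<forall>p\<in>M. \<phi> \<omega> p \<in> M) \<and>
     (\<forall>p\<in>M. \<phi> 0 p = p) \<and>
     (\<forall>\<omega> \<omega>'. \<forall>p\<in>M. \<phi> (\<omega> + \<omega>') p = \<phi> \<omega> (\<phi> \<omega>' p)) \<and>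
     continuous_on (UNIV \<times> M) (\<lambda>(\<omega>, p). \<phi> \<omega> p) \<and>
     (\<exists>U X1 X2. open U \<and> M \<subseteq> U \<and> C1_on U X1 \<and> C1_on U X2 \<and>
        (\<forall>p\<in>M. ((\<lambda>t. \<phi> (t, 0) p) has_vector_derivative X1 p) (at 0) \<and>
                ((\<lambda>t. \<phi> (0, t) p) has_vector_derivative X2 p) (at 0)))"

definition orbit :: "(real \<times> real \<Rightarrow> 'a \<Rightarrow> 'a) \<Rightarrow> 'a \<Rightarrow> 'a set" where
  "orbit \<phi> p = range (\<lambda>\<omega>. \<phi> \<omega> p)"

definition isotropy :: "(real \<times> real \<Rightarrow> 'a \<Rightarrow> 'a) \<Rightarrow> 'a \<Rightarrow> (real \<times> real) set" where
  "isotropy \<phi> p = {\<omega>. \<phi> \<omega> p = p}"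

definition two_dim_orbit :: "(real \<times> real \<Rightarrow> 'a \<Rightarrow> 'a) \<Rightarrow> 'a \<Rightarrow> bool" where
  "two_dim_orbit \<phi> p \<longleftrightarrow> discrete (isotropy \<phi> p)"

text \<open>The orbit of p, identified with R^2 / G_p (quotient topology), is homeomorphic to C:
  there is a continuous open surjection R^2 \<rightarrow> C whose fibres are exactly the fibres of
  \<omega> \<mapsto> \<phi> \<omega> p, i.e. the cosets of G_p.\<close>
definition orbit_homeomorphic :: "(real \<times> real \<Rightarrow> 'a \<Rightarrow> 'a) \<Rightarrow> 'a \<Rightarrow> 'b::topological_space set \<Rightarrow> bool" where
  "orbit_homeomorphic \<phi> p C \<longleftrightarrow>
     (\<exists>h :: real \<times> real \<Rightarrow> 'b. continuous_on UNIV h \<and> h ` UNIV = C \<and>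
        (\<forall>U. open U \<longrightarrow> openin (top_of_set C) (h ` U)) \<and>
        (\<forall>\<omega> \<omega>'. h \<omega> = h \<omega>' \<longleftrightarrow> \<phi> \<omega> p = \<phi> \<omega>' p))"

definition cylinder :: "(complex \<times> real) set" where
  "cylinder = sphere 0 1 \<times> UNIV"

definition torus :: "(complex \<times> complex) set" where
  "torus = sphere 0 1 \<times> sphere 0 1"

end

(*
  A nonzero period v of the dense cylinder orbit exists, because the plane is simply connected
  and the cylinder is not.  As R^2 is abelian, v fixes every point of that orbit, hence by
  continuity every point of its closure M.  So the isotropy group of any point q contains v; if
  it is discrete, it is a discrete subgroup of R^2 of rank one or two, i.e. Z u or a lattice,
  and the orbit R^2 / G_q is a cylinder or a torus.
*)
theory Submission
  imports Defs
begin

section \<open>The cylinder and the torus as quotients of the plane\<close>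

definition circle_map :: "real \<Rightarrow> complex" where
  "circle_map t = exp (\<i> * of_real (2 * pi * t))"

lemma norm_circle_map [simp]: "norm (circle_map t) = 1"
  by (simp add: circle_map_def)

lemma circle_map_diff: "circle_map (a - b) = circle_map a / circle_map b"
  by (simp add: circle_map_def algebra_simps exp_diff)

lemma circle_map_eq_iff: "circle_map a = circle_map b \<longleftrightarrow> (\<exists>n::int. a - b = of_int n)"
proof -
  have "circle_map b \<noteq> 0"
    by (metis norm_circle_map norm_zero zero_neq_one)
  then have "circle_map a = circle_map b \<longleftrightarrow> circle_map (a - b) = 1"
    by (simp add: circle_map_diff)
  also have "\<dots> \<longleftrightarrow> (\<exists>n::int. a - b = of_int n)"
    by (simp add: circle_map_def exp_eq_1)
  finally show ?thesis .
qed

lemma range_circle_map: "range circle_map = sphere 0 1"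
proof
  show "sphere 0 1 \<subseteq> range circle_map"
  proof
    fix z :: complex
    assume "z \<in> sphere 0 1"
    then have "z = cis (Arg z)"
      using rcis_cmod_Arg[of z] by (simp add: rcis_def)
    also have "\<dots> = circle_map (Arg z / (2 * pi))"
      by (simp add: circle_map_def cis_conv_exp)
    finally show "z \<in> range circle_map" by blast
  qed
qed auto

lemma continuous_on_circle_map [continuous_intros]:
  "continuous_on S f \<Longrightarrow> continuous_on S (\<lambda>x. circle_map (f x))"
  unfolding circle_map_def by (intro continuous_intros)

lemma openin_circle_map_image:
  assumes "open A"
  shows "openin (top_of_set (sphere 0 1)) (circle_map ` A)"
proof -
  define W where "W = (\<lambda>z::complex. Im z / (2 * pi)) -` A"
  have "open W"
    unfolding W_def by (intro open_vimage assms continuous_intros) auto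
  then have "openin (top_of_set (- {0})) (exp ` W)"
    by (intro covering_space_open_map[OF covering_space_exp_punctured_plane]) auto
  then have "open (exp ` W)"
    by (rule openin_open_trans) auto
  moreover have "circle_map ` A = sphere 0 1 \<inter> exp ` W"
  proof (intro equalityI subsetI)
    fix y
    assume "y \<in> circle_map ` A"
    then show "y \<in> sphere 0 1 \<inter> exp ` W"
      by (auto simp: circle_map_def W_def)
  next
    fix y
    assume "y \<in> sphere 0 1 \<inter> exp ` W"
    then obtain z where z: "z \<in> W" "y = exp z" "Re z = 0"
      by auto
    then have "z = \<i> * of_real (Im z)"
      by (simp add: complex_eq_iff)
    with z have "y = circle_map (Im z / (2 * pi))"
      by (simp add: circle_map_def)
    moreover have "Im z / (2 * pi) \<in> A"
      using z by (simp add: W_def)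
    ultimately show "y \<in> circle_map ` A"
      by blast
  qed
  ultimately show ?thesis
    by (auto simp: openin_open)
qed

lemma openin_map_prod_image:
  assumes f: "\<And>A. open A \<Longrightarrow> openin (top_of_set S) (f ` A)"
    and g: "\<And>B. open B \<Longrightarrow> openin (top_of_set T) (g ` B)"
    and "open W"
  shows "openin (top_of_set (S \<times> T)) (map_prod f g ` W)"
proof (subst openin_subopen, intro ballI)
  fix z
  assume "z \<in> map_prod f g ` W"
  then obtain a b where ab: "(a, b) \<in> W" "z = (f a, g b)"
    by auto
  then obtain A B where AB: "open A" "open B" "a \<in> A" "b \<in> B" "A \<times> B \<subseteq> W"
    using open_prod_elim[OF \<open>open W\<close>] by (metis mem_Sigma_iff)
  show "\<exists>U. openin (top_of_set (S \<times> T)) U \<and> z \<in> U \<and> U \<subseteq> map_prod f g ` W"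
  proof (intro exI conjI)
    show "openin (top_of_set (S \<times> T)) (f ` A \<times> g ` B)"
      using AB by (intro openin_Times f g)
    show "f ` A \<times> g ` B \<subseteq> map_prod f g ` W"
      using AB(5) by (auto simp flip: map_prod_surj_on)
  qed (use AB ab in auto)
qed

definition cylinder_map :: "real \<times> real \<Rightarrow> complex \<times> real" where
  "cylinder_map = map_prod circle_map id"

definition torus_map :: "real \<times> real \<Rightarrow> complex \<times> complex" where
  "torus_map = map_prod circle_map circle_map"

lemma continuous_on_cylinder_map: "continuous_on UNIV cylinder_map"
  unfolding cylinder_map_def map_prod_def split_beta id_def by (intro continuous_intros)

lemma continuous_on_torus_map: "continuous_on UNIV torus_map"
  unfolding torus_map_def map_prod_def split_beta by (intro continuous_intros)

lemma range_cylinder_map: "range cylinder_map = cylinder"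
proof -
  have "range (map_prod circle_map (id :: real \<Rightarrow> real)) = range circle_map \<times> range id"
    by (metis UNIV_Times_UNIV map_prod_surj_on)
  then show ?thesis
    by (simp add: cylinder_map_def cylinder_def range_circle_map)
qed

lemma range_torus_map: "range torus_map = torus"
  unfolding torus_map_def torus_def
  by (metis UNIV_Times_UNIV map_prod_surj_on range_circle_map)

lemma openin_cylinder_map_image: "open W \<Longrightarrow> openin (top_of_set cylinder) (cylinder_map ` W)"
  unfolding cylinder_map_def cylinder_def
  by (intro openin_map_prod_image openin_circle_map_image) auto

lemma openin_torus_map_image: "open W \<Longrightarrow> openin (top_of_set torus) (torus_map ` W)"
  unfolding torus_map_def torus_def
  by (intro openin_map_prod_image openin_circle_map_image)

lemma cylinder_map_eq_iff:
  "cylinder_map a = cylinder_map b \<longleftrightarrow> (\<exists>n::int. a - b = (of_int n, 0))"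
  by (cases a; cases b) (auto simp: cylinder_map_def circle_map_eq_iff)

lemma torus_map_eq_iff:
  "torus_map a = torus_map b \<longleftrightarrow> (\<exists>n m::int. a - b = (of_int n, of_int m))"
  by (cases a; cases b) (auto simp: torus_map_def circle_map_eq_iff)

section \<open>Linear coordinates in the plane\<close>

definition det2 :: "real \<times> real \<Rightarrow> real \<times> real \<Rightarrow> real" where
  "det2 a b = fst a * snd b - snd a * fst b"

definition lincomb :: "real \<times> real \<Rightarrow> real \<times> real \<Rightarrow> real \<times> real \<Rightarrow> real \<times> real" where
  "lincomb u1 u2 x = fst x *\<^sub>R u1 + snd x *\<^sub>R u2"

text \<open>Coordinates with respect to the basis u1, u2, by Cramer's rule.\<close>
definition coords :: "real \<times> real \<Rightarrow> real \<times> real \<Rightarrow> real \<times> real \<Rightarrow> real \<times> real" where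
  "coords u1 u2 w = (det2 w u2 / det2 u1 u2, det2 u1 w / det2 u1 u2)"

lemma linear_det2_right: "linear (det2 a)"
  by (rule linearI) (auto simp: det2_def algebra_simps)

lemma det2_eq_0_imp_collinear:
  assumes "a \<noteq> 0" "det2 a b = 0"
  shows "\<exists>c. b = c *\<^sub>R a"
proof (cases "fst a = 0")
  case True
  with assms show ?thesis
    by (intro exI[of _ "snd b / snd a"]) (auto simp: det2_def prod_eq_iff field_simps)
next
  case False
  with assms show ?thesis
    by (intro exI[of _ "fst b / fst a"]) (auto simp: det2_def prod_eq_iff field_simps)
qed

lemma linear_coords: "linear (coords u1 u2)"
  by (rule linearI) (auto simp: coords_def det2_def add_divide_distrib diff_divide_distrib algebra_simps)

lemma linear_lincomb: "linear (lincomb u1 u2)"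
  by (rule linearI) (auto simp: lincomb_def algebra_simps)

lemma coords_eq_iff:
  assumes "det2 u1 u2 \<noteq> 0"
  shows "coords u1 u2 w = x \<longleftrightarrow> w = lincomb u1 u2 x"
proof
  have "lincomb u1 u2 (coords u1 u2 w) = (1 / det2 u1 u2) *\<^sub>R (det2 w u2 *\<^sub>R u1 + det2 u1 w *\<^sub>R u2)"
    by (simp add: lincomb_def coords_def scaleR_add_right)
  also have "det2 w u2 *\<^sub>R u1 + det2 u1 w *\<^sub>R u2 = det2 u1 u2 *\<^sub>R w"
    by (simp add: det2_def prod_eq_iff algebra_simps)
  finally show "w = lincomb u1 u2 x" if "coords u1 u2 w = x"
    using that assms by simp
next
  have "det2 (lincomb u1 u2 x) u2 = fst x * det2 u1 u2" "det2 u1 (lincomb u1 u2 x) = snd x * det2 u1 u2"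
    by (simp_all add: det2_def lincomb_def algebra_simps)
  with assms show "coords u1 u2 w = x" if "w = lincomb u1 u2 x"
    using that by (simp add: coords_def)
qed

lemma continuous_on_lincomb: "continuous_on S (lincomb u1 u2)"
  using linear_lincomb[of u1 u2] by (simp add: linear_continuous_on linear_conv_bounded_linear)

lemma homeomorphism_coords:
  assumes "det2 u1 u2 \<noteq> 0"
  shows "homeomorphism UNIV UNIV (coords u1 u2) (lincomb u1 u2)"
proof (rule homeomorphismI)
  show "continuous_on UNIV (coords u1 u2)"
    using linear_coords[of u1 u2] by (simp add: linear_continuous_on linear_conv_bounded_linear)
  show "continuous_on UNIV (lincomb u1 u2)"
    by (rule continuous_on_lincomb)
qed (auto simp: coords_eq_iff[OF assms], metis coords_eq_iff[OF assms])

section \<open>Discrete additive subgroups\<close>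

definition add_subgroup :: "'a::ab_group_add set \<Rightarrow> bool" where
  "add_subgroup G \<longleftrightarrow> 0 \<in> G \<and> (\<forall>x\<in>G. \<forall>y\<in>G. x - y \<in> G)"

lemma add_subgroup_zero: "add_subgroup G \<Longrightarrow> 0 \<in> G"
  by (simp add: add_subgroup_def)

lemma add_subgroup_diff: "add_subgroup G \<Longrightarrow> x \<in> G \<Longrightarrow> y \<in> G \<Longrightarrow> x - y \<in> G"
  by (simp add: add_subgroup_def)

lemma add_subgroup_add:
  assumes "add_subgroup G" "x \<in> G" "y \<in> G"
  shows "x + y \<in> G"
proof -
  have "x - (0 - y) \<in> G"
    using assms by (intro add_subgroup_diff add_subgroup_zero)
  then show ?thesis
    by simp
qed

lemma add_subgroup_of_int_scaleR:
  fixes G :: "'a::real_vector set"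
  assumes "add_subgroup G" "x \<in> G"
  shows "of_int k *\<^sub>R x \<in> G"
proof (induction k rule: int_induct[where k = 0])
  case base
  then show ?case
    using add_subgroup_zero[OF assms(1)] by simp
next
  case (step1 i)
  then show ?case
    using add_subgroup_add[OF assms(1) step1(2) assms(2)] by (simp add: algebra_simps)
next
  case (step2 i)
  then show ?case
    using add_subgroup_diff[OF assms(1) step2(2) assms(2)] by (simp add: algebra_simps)
qed

lemma add_subgroup_linear_image:
  assumes "linear f" "add_subgroup G"
  shows "add_subgroup (f ` G)"
  unfolding add_subgroup_def
proof (intro conjI ballI)
  show "0 \<in> f ` G"
    using assms by (metis add_subgroup_zero image_eqI linear_0)
  fix x y
  assume "x \<in> f ` G" "y \<in> f ` G"
  then obtain a b where "a \<in> G" "b \<in> G" "x = f a" "y = f b"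
    by blast
  then have "x - y = f (a - b)" "a - b \<in> G"
    using assms by (simp_all add: linear_diff add_subgroup_diff)
  then show "x - y \<in> f ` G"
    by blast
qed

lemma add_subgroup_linear_vimage:
  assumes "linear f" "add_subgroup G"
  shows "add_subgroup (f -` G)"
  using assms unfolding add_subgroup_def by (simp add: linear_0 linear_diff)

lemma add_subgroup_discrete_imp_uniform_discrete:
  fixes G :: "'a::real_normed_vector set"
  assumes "add_subgroup G" "discrete G"
  shows "uniform_discrete G"
proof -
  have "0 isolated_in G"
    using assms by (simp add: discreteD add_subgroup_zero)
  then obtain e where "e > 0" and e: "\<And>y. y \<in> G \<Longrightarrow> dist 0 y < e \<Longrightarrow> y = 0"
    unfolding isolated_in_dist_Ex_iff by blast
  have "x = y" if "x \<in> G" "y \<in> G" "dist x y < e" for x y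
    using e[OF add_subgroup_diff[OF assms(1) that(1,2)]] that(3)
    by (simp add: dist_norm norm_minus_commute)
  with \<open>e > 0\<close> show ?thesis
    unfolding uniform_discrete_def by blast
qed

lemma add_subgroup_discreteI:
  fixes G :: "'a::real_normed_vector set"
  assumes "add_subgroup G" "r > 0" "finite (G \<inter> ball 0 r)"
  shows "discrete G"
proof -
  obtain d where "d > 0" and d: "\<And>x. x \<in> G \<inter> ball 0 r \<Longrightarrow> x \<noteq> 0 \<Longrightarrow> d \<le> dist 0 x"
    using finite_set_avoid[OF assms(3), of 0] by blast
  have "x = y" if "x \<in> G" "y \<in> G" "dist x y < min d r" for x y
  proof (rule ccontr)
    assume "x \<noteq> y"
    moreover have "x - y \<in> G \<inter> ball 0 r"
      using that add_subgroup_diff[OF assms(1)] by (simp add: dist_norm norm_minus_commute)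
    ultimately have "d \<le> dist x y"
      using d[of "x - y"] by (simp add: dist_norm norm_minus_commute)
    with that(3) show False
      by simp
  qed
  then have "uniform_discrete G"
    unfolding uniform_discrete_def using \<open>d > 0\<close> \<open>r > 0\<close>
    by (metis min_less_iff_conj)
  then show ?thesis
    by (rule uniform_discrete_imp_discrete)
qed

lemma finite_add_subgroup_inter_bounded:
  fixes G :: "'a::{real_normed_vector, heine_borel} set"
  assumes "add_subgroup G" "discrete G" "bounded S"
  shows "finite (G \<inter> S)"
proof -
  have "uniform_discrete (G \<inter> S)"
    using add_subgroup_discrete_imp_uniform_discrete[OF assms(1,2)]
    by (rule uniform_discrete_subset) blast
  moreover have "bounded (G \<inter> S)"
    using assms(3) by (simp add: bounded_Int)
  ultimately show ?thesis
    using uniform_discrete_finite_iff by blast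
qed

lemma discrete_add_subgroup_real_cyclic:
  fixes H :: "real set"
  assumes "add_subgroup H" "discrete H"
  shows "\<exists>t. H = range (\<lambda>k::int. of_int k * t)"
proof (cases "H \<subseteq> {0}")
  case True
  then show ?thesis
    using add_subgroup_zero[OF assms(1)] by (intro exI[of _ 0]) auto
next
  case False
  then obtain h where "h \<in> H" "h \<noteq> 0"
    by blast
  then have "\<bar>h\<bar> \<in> H" "\<bar>h\<bar> > 0"
    using add_subgroup_diff[OF assms(1) add_subgroup_zero[OF assms(1)], of h] by (auto simp: abs_if)
  define S where "S = H \<inter> {0<..\<bar>h\<bar>}"
  have "finite S"
    unfolding S_def using assms by (intro finite_add_subgroup_inter_bounded) auto
  moreover have "\<bar>h\<bar> \<in> S"
    using \<open>\<bar>h\<bar> \<in> H\<close> \<open>\<bar>h\<bar> > 0\<close> by (simp add: S_def)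
  ultimately have "Min S \<in> S" and Min_le: "\<And>s. s \<in> S \<Longrightarrow> Min S \<le> s"
    by (auto intro: Min_in)
  define t where "t = Min S"
  have "t > 0" "t \<in> H" "t \<le> \<bar>h\<bar>"
    using \<open>Min S \<in> S\<close> by (auto simp: t_def S_def)
  have "x \<in> range (\<lambda>k::int. of_int k * t)" if "x \<in> H" for x
  proof -
    define k where "k = \<lfloor>x / t\<rfloor>"
    have "of_int k \<le> x / t" "x / t < of_int k + 1"
      unfolding k_def by linarith+
    then have lo: "0 \<le> x - of_int k * t" and hi: "x - of_int k * t < t"
      using \<open>t > 0\<close> by (simp_all add: field_simps)
    have "x - of_int k * t \<in> H"
      using add_subgroup_diff[OF assms(1) that add_subgroup_of_int_scaleR[OF assms(1) \<open>t \<in> H\<close>]]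
      by simp
    have "x - of_int k * t = 0"
    proof (rule ccontr)
      assume "x - of_int k * t \<noteq> 0"
      with lo hi \<open>x - of_int k * t \<in> H\<close> \<open>t \<le> \<bar>h\<bar>\<close> have "x - of_int k * t \<in> S"
        by (simp add: S_def)
      then have "t \<le> x - of_int k * t"
        unfolding t_def by (rule Min_le)
      with hi show False
        by simp
    qed
    then show ?thesis
      by (simp add: image_iff)
  qed
  moreover have "of_int k * t \<in> H" for k :: int
    using add_subgroup_of_int_scaleR[OF assms(1) \<open>t \<in> H\<close>] by simp
  ultimately show ?thesis
    by blast
qed

lemma discrete_add_subgroup_primitive_vector:
  fixes G :: "'a::real_normed_vector set"
  assumes "add_subgroup G" "discrete G" "v \<in> G" "v \<noteq> 0"
  shows "\<exists>u. u \<noteq> 0 \<and> G \<inter> range (\<lambda>c. c *\<^sub>R u) = range (\<lambda>k::int. of_int k *\<^sub>R u)"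
proof -
  define H where "H = (\<lambda>c. c *\<^sub>R v) -` G"
  have "add_subgroup H"
    unfolding H_def using assms(1) by (intro add_subgroup_linear_vimage linear_scaleR_left)
  moreover have "uniform_discrete H"
  proof -
    obtain e where "e > 0" and e: "\<And>x y. x \<in> G \<Longrightarrow> y \<in> G \<Longrightarrow> dist x y < e \<Longrightarrow> x = y"
      using add_subgroup_discrete_imp_uniform_discrete[OF assms(1,2)]
      unfolding uniform_discrete_def by blast
    have "c = c'" if "c \<in> H" "c' \<in> H" "dist c c' < e / norm v" for c c'
    proof -
      have "dist (c *\<^sub>R v) (c' *\<^sub>R v) = dist c c' * norm v"
        by (simp add: dist_norm flip: scaleR_diff_left)
      also have "\<dots> < e"
        using that(3) assms(4) by (simp add: pos_less_divide_eq)
      finally have "c *\<^sub>R v = c' *\<^sub>R v"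
        using e that(1,2) unfolding H_def by blast
      then show "c = c'"
        using assms(4) by simp
    qed
    moreover have "e / norm v > 0"
      using \<open>e > 0\<close> assms(4) by simp
    ultimately show ?thesis
      unfolding uniform_discrete_def by blast
  qed
  ultimately obtain t where t: "H = range (\<lambda>k::int. of_int k * t)"
    using discrete_add_subgroup_real_cyclic uniform_discrete_imp_discrete by blast
  have "1 \<in> H"
    using assms(3) by (simp add: H_def)
  then have "t \<noteq> 0"
    using t by auto
  define u where "u = t *\<^sub>R v"
  have "c *\<^sub>R u \<in> G \<longleftrightarrow> c * t \<in> H" for c
    by (simp add: H_def u_def)
  also have "\<dots> c \<longleftrightarrow> (\<exists>k::int. c * t = of_int k * t)" for c
    using t by auto
  also have "\<dots> c \<longleftrightarrow> (\<exists>k::int. c = of_int k)" for c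
    using \<open>t \<noteq> 0\<close> by simp
  finally have "G \<inter> range (\<lambda>c. c *\<^sub>R u) = range (\<lambda>k::int. of_int k *\<^sub>R u)"
    by (auto simp: image_iff)
  moreover have "u \<noteq> 0"
    using \<open>t \<noteq> 0\<close> assms(4) by (simp add: u_def)
  ultimately show ?thesis
    by blast
qed

text \<open>Subtracting a suitable integer multiple of u moves g \<in> G into a bounded fundamental
  region without changing det2 u g; hence only finitely many values of det2 u on G are small.\<close>
lemma discrete_det2_image:
  fixes G :: "(real \<times> real) set"
  assumes "add_subgroup G" "discrete G" "u \<in> G" "det2 u w \<noteq> 0"
  shows "discrete (det2 u ` G)"
proof -
  define d where "d = det2 u w"
  define F where "F = G \<inter> lincomb u w ` ({-1..1} \<times> {-1..1})"
  have "finite F"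
    unfolding F_def using assms(1,2)
    by (intro finite_add_subgroup_inter_bounded compact_imp_bounded compact_continuous_image
        continuous_on_lincomb compact_Times compact_Icc)
  have coords_u: "coords u w u = (1, 0)"
    using coords_eq_iff[OF assms(4)] by (simp add: lincomb_def)
  have "det2 u ` G \<inter> ball 0 \<bar>d\<bar> \<subseteq> det2 u ` F"
  proof
    fix k
    assume "k \<in> det2 u ` G \<inter> ball 0 \<bar>d\<bar>"
    then obtain g where g: "g \<in> G" "k = det2 u g" "\<bar>k\<bar> < \<bar>d\<bar>"
      by auto
    define a where "a = fst (coords u w g)"
    define g' where "g' = g - of_int \<lfloor>a\<rfloor> *\<^sub>R u"
    have "g' \<in> G"
      unfolding g'_def using assms(1,3) g(1) by (intro add_subgroup_diff add_subgroup_of_int_scaleR)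
    have "det2 u g' = k"
      using g(2) by (simp add: g'_def det2_def algebra_simps)
    have "coords u w g' = coords u w g - of_int \<lfloor>a\<rfloor> *\<^sub>R coords u w u"
      unfolding g'_def using linear_coords by (simp add: linear_diff linear_scale)
    also have "\<dots> = (a - of_int \<lfloor>a\<rfloor>, k / d)"
      using coords_u g(2) by (simp add: a_def coords_def d_def)
    finally have "coords u w g' \<in> {-1..1} \<times> {-1..1}"
      using g(3) by (auto simp: abs_le_iff divide_le_eq le_divide_eq) linarith+
    then have "g' \<in> F"
      unfolding F_def using \<open>g' \<in> G\<close> coords_eq_iff[OF assms(4)] by blast
    with \<open>det2 u g' = k\<close> show "k \<in> det2 u ` F"
      by blast
  qed
  then have "finite (det2 u ` G \<inter> ball 0 \<bar>d\<bar>)"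
    using \<open>finite F\<close> by (meson finite_imageI finite_subset)
  moreover have "\<bar>d\<bar> > 0"
    using assms(4) by (simp add: d_def)
  ultimately show ?thesis
    using add_subgroup_linear_image[OF linear_det2_right assms(1)] by (intro add_subgroup_discreteI)
qed
definition int_lattice :: "real \<times> real \<Rightarrow> real \<times> real \<Rightarrow> (real \<times> real) set" where
  "int_lattice u1 u2 = {of_int k *\<^sub>R u1 + of_int l *\<^sub>R u2 | k l :: int. True}"

lemma discrete_add_subgroup_lattice:
  fixes G :: "(real \<times> real) set"
  assumes "add_subgroup G" "discrete G"
    and line: "G \<inter> range (\<lambda>c. c *\<^sub>R u) = range (\<lambda>k::int. of_int k *\<^sub>R u)"
    and "w \<in> G" "det2 u w \<noteq> 0"
  shows "\<exists>u'. det2 u u' \<noteq> 0 \<and> G = int_lattice u u'"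
proof -
  have "u \<in> range (\<lambda>k::int. of_int k *\<^sub>R u)"
    using rangeI[of "\<lambda>k::int. of_int k *\<^sub>R u" 1] by simp
  then have "u \<in> G"
    unfolding line[symmetric] by blast
  have "u \<noteq> 0"
    using assms(5) by (auto simp: det2_def)
  obtain t where t: "det2 u ` G = range (\<lambda>k::int. of_int k * t)"
    using discrete_add_subgroup_real_cyclic[OF add_subgroup_linear_image[OF linear_det2_right assms(1)]
        discrete_det2_image[OF assms(1,2) \<open>u \<in> G\<close> assms(5)]]
    by blast
  have "t \<in> det2 u ` G"
    unfolding t using rangeI[of "\<lambda>k::int. of_int k * t" 1] by simp
  then obtain u' where "u' \<in> G" "det2 u u' = t"
    by blast
  have "det2 u w \<in> range (\<lambda>k::int. of_int k * t)"
    unfolding t[symmetric] using assms(4) by blast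
  with assms(5) have "t \<noteq> 0"
    by auto
  have "g \<in> int_lattice u u'" if "g \<in> G" for g
  proof -
    have "det2 u g \<in> range (\<lambda>k::int. of_int k * t)"
      unfolding t[symmetric] using that by blast
    then obtain l :: int where l: "det2 u g = of_int l * t"
      by blast
    define g' where "g' = g - of_int l *\<^sub>R u'"
    have "g' \<in> G"
      unfolding g'_def using assms(1) that \<open>u' \<in> G\<close> by (intro add_subgroup_diff add_subgroup_of_int_scaleR)
    moreover have "det2 u g' = 0"
      using l \<open>det2 u u' = t\<close> by (simp add: g'_def linear_diff[OF linear_det2_right] linear_scale[OF linear_det2_right])
    then obtain c where "g' = c *\<^sub>R u"
      using det2_eq_0_imp_collinear \<open>u \<noteq> 0\<close> by blast
    ultimately have "g' \<in> range (\<lambda>k::int. of_int k *\<^sub>R u)"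
      unfolding line[symmetric] by blast
    then obtain k :: int where "g' = of_int k *\<^sub>R u"
      by blast
    then have "g = of_int k *\<^sub>R u + of_int l *\<^sub>R u'"
      by (simp add: g'_def diff_eq_eq)
    then show ?thesis
      unfolding int_lattice_def by blast
  qed
  moreover have "of_int k *\<^sub>R u + of_int l *\<^sub>R u' \<in> G" for k l :: int
    using assms(1) \<open>u \<in> G\<close> \<open>u' \<in> G\<close> by (intro add_subgroup_add add_subgroup_of_int_scaleR)
  ultimately have "G = int_lattice u u'"
    unfolding int_lattice_def by (intro equalityI subsetI) auto
  with \<open>det2 u u' = t\<close> \<open>t \<noteq> 0\<close> show ?thesis
    by blast
qed

lemma discrete_add_subgroup_plane_cases:
  fixes G :: "(real \<times> real) set"
  assumes "add_subgroup G" "discrete G"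
  shows "(\<exists>u. G = range (\<lambda>k::int. of_int k *\<^sub>R u)) \<or>
         (\<exists>u1 u2. det2 u1 u2 \<noteq> 0 \<and> G = int_lattice u1 u2)"
proof (cases "G \<subseteq> {0}")
  case True
  then have "G = range (\<lambda>k::int. of_int k *\<^sub>R (0 :: real \<times> real))"
    using add_subgroup_zero[OF assms(1)] by auto
  then show ?thesis
    by blast
next
  case False
  then obtain v where "v \<in> G" "v \<noteq> 0"
    by blast
  then obtain u where "u \<noteq> 0" and line: "G \<inter> range (\<lambda>c. c *\<^sub>R u) = range (\<lambda>k::int. of_int k *\<^sub>R u)"
    using discrete_add_subgroup_primitive_vector[OF assms] by blast
  show ?thesis
  proof (cases "\<forall>g\<in>G. det2 u g = 0")
    case True
    then have "G \<subseteq> range (\<lambda>c. c *\<^sub>R u)"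
      using det2_eq_0_imp_collinear[OF \<open>u \<noteq> 0\<close>] by blast
    then have "G = range (\<lambda>k::int. of_int k *\<^sub>R u)"
      unfolding line[symmetric] by blast
    then show ?thesis
      by blast
  next
    case False
    then obtain w where "w \<in> G" "det2 u w \<noteq> 0"
      by blast
    then show ?thesis
      using discrete_add_subgroup_lattice[OF assms line] by blast
  qed
qed

section \<open>Orbits of planar actions\<close>

lemma orbit_homeomorphicI:
  fixes F :: "real \<times> real \<Rightarrow> 'b::topological_space"
  assumes hom: "homeomorphism UNIV UNIV L L'"
    and "continuous_on UNIV F" "range F = C"
    and "\<And>U. open U \<Longrightarrow> openin (top_of_set C) (F ` U)"
    and "\<And>w w'. F (L w) = F (L w') \<longleftrightarrow> \<phi> w q = \<phi> w' q"
  shows "orbit_homeomorphic \<phi> q C"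
  unfolding orbit_homeomorphic_def
proof (intro exI conjI allI impI)
  have "continuous_on UNIV L" "range L = UNIV"
    using hom by (simp_all add: homeomorphism_def)
  then show "continuous_on UNIV (F \<circ> L)" "(F \<circ> L) ` UNIV = C"
    using assms(2,3) by (metis continuous_on_compose continuous_on_subset subset_UNIV, metis image_comp)
  fix U :: "(real \<times> real) set"
  assume "open U"
  then have "open (L ` U)"
    using homeomorphism_imp_open_map[OF hom, of U] by simp
  then show "openin (top_of_set C) ((F \<circ> L) ` U)"
    by (metis assms(4) image_comp)
qed (simp add: assms(5))

lemma orbit_homeomorphic_cylinderI:
  assumes "u \<noteq> 0" and fibres: "\<And>w w'. \<phi> w q = \<phi> w' q \<longleftrightarrow> w - w' \<in> range (\<lambda>k::int. of_int k *\<^sub>R u)"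
  shows "orbit_homeomorphic \<phi> q cylinder"
proof -
  define u2 where "u2 = (- snd u, fst u)"
  have "det2 u u2 = (fst u)\<^sup>2 + (snd u)\<^sup>2"
    by (simp add: det2_def u2_def power2_eq_square)
  with assms(1) have d: "det2 u u2 \<noteq> 0"
    by (simp add: prod_eq_iff sum_power2_eq_zero_iff)
  show ?thesis
  proof (rule orbit_homeomorphicI[OF homeomorphism_coords[OF d] continuous_on_cylinder_map
        range_cylinder_map openin_cylinder_map_image])
    fix w w'
    have "cylinder_map (coords u u2 w) = cylinder_map (coords u u2 w') \<longleftrightarrow>
          (\<exists>n::int. coords u u2 (w - w') = (of_int n, 0))"
      by (simp add: cylinder_map_eq_iff linear_diff[OF linear_coords])
    also have "\<dots> \<longleftrightarrow> w - w' \<in> range (\<lambda>k::int. of_int k *\<^sub>R u)"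
      by (auto simp: coords_eq_iff[OF d] lincomb_def)
    finally show "cylinder_map (coords u u2 w) = cylinder_map (coords u u2 w') \<longleftrightarrow> \<phi> w q = \<phi> w' q"
      by (simp add: fibres)
  qed
qed

lemma orbit_homeomorphic_torusI:
  assumes d: "det2 u1 u2 \<noteq> 0"
    and fibres: "\<And>w w'. \<phi> w q = \<phi> w' q \<longleftrightarrow> w - w' \<in> int_lattice u1 u2"
  shows "orbit_homeomorphic \<phi> q torus"
proof (rule orbit_homeomorphicI[OF homeomorphism_coords[OF d] continuous_on_torus_map
      range_torus_map openin_torus_map_image])
  fix w w'
  have "torus_map (coords u1 u2 w) = torus_map (coords u1 u2 w') \<longleftrightarrow>
        (\<exists>k l::int. coords u1 u2 (w - w') = (of_int k, of_int l))"
    by (simp add: torus_map_eq_iff linear_diff[OF linear_coords])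
  also have "\<dots> \<longleftrightarrow> w - w' \<in> int_lattice u1 u2"
    by (simp add: coords_eq_iff[OF d] lincomb_def int_lattice_def)
  finally show "torus_map (coords u1 u2 w) = torus_map (coords u1 u2 w') \<longleftrightarrow> \<phi> w q = \<phi> w' q"
    by (simp add: fibres)
qed

lemma C1_action_fibre_iff:
  assumes "C1_action M \<phi>" "q \<in> M"
  shows "\<phi> w q = \<phi> w' q \<longleftrightarrow> w - w' \<in> isotropy \<phi> q"
proof -
  have act: "\<And>a b. \<phi> (a + b) q = \<phi> a (\<phi> b q)" "\<phi> 0 q = q"
    using assms unfolding C1_action_def by blast+
  have "\<phi> w q = \<phi> w' (\<phi> (w - w') q)" "\<phi> (w - w') q = \<phi> (- w') (\<phi> w q)"
    by (simp_all flip: act(1))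
  moreover have "\<phi> (- w') (\<phi> w' q) = q"
    by (simp add: act flip: act(1))
  ultimately show ?thesis
    unfolding isotropy_def by auto
qed

lemma add_subgroup_isotropy:
  assumes "C1_action M \<phi>" "q \<in> M"
  shows "add_subgroup (isotropy \<phi> q)"
proof -
  have "\<phi> 0 q = q"
    using assms unfolding C1_action_def by blast
  show ?thesis
    unfolding add_subgroup_def
  proof (intro conjI ballI)
    show "0 \<in> isotropy \<phi> q"
      using \<open>\<phi> 0 q = q\<close> by (simp add: isotropy_def)
    fix x y
    assume "x \<in> isotropy \<phi> q" "y \<in> isotropy \<phi> q"
    then have "\<phi> x q = \<phi> y q"
      by (simp add: isotropy_def)
    then show "x - y \<in> isotropy \<phi> q"
      by (simp add: C1_action_fibre_iff[OF assms])
  qed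
qed

lemma isotropy_subset_closure_orbit:
  assumes "C1_action M \<phi>" "closed M" "p \<in> M" "q \<in> closure (orbit \<phi> p)"
  shows "isotropy \<phi> p \<subseteq> isotropy \<phi> q"
proof
  fix v
  assume "v \<in> isotropy \<phi> p"
  have "continuous_on (UNIV \<times> M) (\<lambda>(w, x). \<phi> w x)"
    using assms(1) unfolding C1_action_def by blast
  then have "continuous_on M (\<lambda>x. (\<lambda>(w, x). \<phi> w x) (v, x))"
    by (rule continuous_on_compose2) (auto intro: continuous_intros)
  then have "continuous_on M (\<phi> v)"
    by simp
  then have "closed {x \<in> M. \<phi> v x - x = 0}"
    using assms(2) by (intro continuous_closed_preimage_constant continuous_intros)
  moreover have "orbit \<phi> p \<subseteq> {x \<in> M. \<phi> v x - x = 0}"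
  proof
    fix x
    assume "x \<in> orbit \<phi> p"
    then obtain w where x: "x = \<phi> w p"
      by (auto simp: orbit_def)
    have act: "\<phi> (a + b) p = \<phi> a (\<phi> b p)" "\<phi> a p \<in> M" for a b
      using assms(1,3) unfolding C1_action_def by blast+
    have "\<phi> v x = \<phi> (w + v) p"
      unfolding x by (simp add: add.commute flip: act(1))
    also have "\<dots> = x"
      using \<open>v \<in> isotropy \<phi> p\<close> by (simp add: x act(1) isotropy_def)
    finally show "x \<in> {x \<in> M. \<phi> v x - x = 0}"
      using act(2) x by simp
  qed
  ultimately have "closure (orbit \<phi> p) \<subseteq> {x \<in> M. \<phi> v x - x = 0}"
    by (rule closure_minimal[rotated])
  with assms(4) show "v \<in> isotropy \<phi> q"
    by (auto simp: isotropy_def)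
qed

lemma orbit_homeomorphic_imp_homeomorphic:
  assumes "orbit_homeomorphic \<phi> p C" "inj (\<lambda>w. \<phi> w p)"
  shows "(UNIV :: (real \<times> real) set) homeomorphic C"
proof -
  obtain h :: "real \<times> real \<Rightarrow> 'b" where h: "continuous_on UNIV h" "range h = C"
    "\<And>U. open U \<Longrightarrow> openin (top_of_set C) (h ` U)" "\<And>w w'. h w = h w' \<longleftrightarrow> \<phi> w p = \<phi> w' p"
    using assms(1) unfolding orbit_homeomorphic_def by blast
  have "inj h"
    using assms(2) h(4) by (simp add: inj_def)
  then obtain g where "homeomorphism UNIV C h g"
    using homeomorphism_injective_open_map[OF h(1,2)] h(3) by (metis open_openin subtopology_UNIV)
  then show ?thesis
    unfolding homeomorphic_def by blast
qed

lemma cylinder_not_simply_connected: "\<not> simply_connected cylinder"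
proof
  assume "simply_connected cylinder"
  moreover have "fst ` cylinder = sphere 0 1"
    unfolding cylinder_def by force
  moreover have "(\<lambda>z. (z, 0)) \<in> sphere 0 1 \<rightarrow> cylinder"
    unfolding cylinder_def by auto
  ultimately have "simply_connected (sphere (0::complex) 1)"
    by (intro simply_connected_retraction_gen[of cylinder fst _ "\<lambda>z. (z, 0)"] continuous_intros) auto
  then show False
    by (simp add: simply_connected_sphere_eq)
qed

lemma C1_action_isotropy_nontrivial:
  assumes "C1_action M \<phi>" "p \<in> M" "orbit_homeomorphic \<phi> p C" "\<not> simply_connected C"
  shows "\<exists>v\<in>isotropy \<phi> p. v \<noteq> 0"
proof (rule ccontr)
  assume "\<not> (\<exists>v\<in>isotropy \<phi> p. v \<noteq> 0)"
  then have "inj (\<lambda>w. \<phi> w p)"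
    by (intro injI) (metis C1_action_fibre_iff[OF assms(1,2)] eq_iff_diff_eq_0)
  then have "(UNIV :: (real \<times> real) set) homeomorphic C"
    using orbit_homeomorphic_imp_homeomorphic[OF assms(3)] by blast
  moreover have "simply_connected (UNIV :: (real \<times> real) set)"
    by (simp add: convex_imp_simply_connected)
  ultimately show False
    using assms(4) homeomorphic_simply_connected by blast
qed

lemma C1_action_two_dim_orbit_cases:
  assumes "C1_action M \<phi>" "q \<in> M" "two_dim_orbit \<phi> q" "v \<in> isotropy \<phi> q" "v \<noteq> 0"
  shows "orbit_homeomorphic \<phi> q torus \<or> orbit_homeomorphic \<phi> q cylinder"
proof -
  note fibres = C1_action_fibre_iff[OF assms(1,2)]
  have "add_subgroup (isotropy \<phi> q)" "discrete (isotropy \<phi> q)"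
    using add_subgroup_isotropy[OF assms(1,2)] assms(3) by (simp_all add: two_dim_orbit_def)
  from discrete_add_subgroup_plane_cases[OF this]
  show ?thesis
  proof (elim disjE exE conjE)
    fix u
    assume u: "isotropy \<phi> q = range (\<lambda>k::int. of_int k *\<^sub>R u)"
    have "u \<noteq> 0"
    proof
      assume "u = 0"
      then have "isotropy \<phi> q = {0}"
        by (auto simp: u)
      with assms(4,5) show False
        by simp
    qed
    then show ?thesis
      by (intro disjI2 orbit_homeomorphic_cylinderI) (simp_all add: fibres u)
  next
    fix u1 u2
    assume "det2 u1 u2 \<noteq> 0" "isotropy \<phi> q = int_lattice u1 u2"
    then show ?thesis
      by (intro disjI1 orbit_homeomorphic_torusI) (simp_all add: fibres)
  qed
qed

theorem mainTheorem4:
  fixes M :: "'a::euclidean_space set" and \<phi> :: "real \<times> real \<Rightarrow> 'a \<Rightarrow> 'a" and p :: 'a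
  assumes "closed_manifold M"
    and "C1_action M \<phi>"
    and "p \<in> M"
    and "closure (orbit \<phi> p) = M"
    and "orbit_homeomorphic \<phi> p cylinder"
  shows "\<forall>q\<in>M. two_dim_orbit \<phi> q \<longrightarrow>
           orbit_homeomorphic \<phi> q torus \<or> orbit_homeomorphic \<phi> q cylinder"
proof (intro ballI impI)
  fix q
  assume "q \<in> M" "two_dim_orbit \<phi> q"
  have "closed M"
    using assms(1) by (simp add: closed_manifold_def compact_imp_closed)
  obtain v where "v \<in> isotropy \<phi> p" "v \<noteq> 0"
    using C1_action_isotropy_nontrivial[OF assms(2,3,5) cylinder_not_simply_connected] by blast
  moreover have "isotropy \<phi> p \<subseteq> isotropy \<phi> q"
    using isotropy_subset_closure_orbit[OF assms(2) \<open>closed M\<close> assms(3)] assms(4) \<open>q \<in> M\<close> by blast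
  ultimately show "orbit_homeomorphic \<phi> q torus \<or> orbit_homeomorphic \<phi> q cylinder"
    using C1_action_two_dim_orbit_cases[OF assms(2) \<open>q \<in> M\<close> \<open>two_dim_orbit \<phi> q\<close>] by blast
qed

end
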